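(* Let $\mathbb{R}^n$ carry a norm $\|\cdot\|$, $Q\subseteq\mathbb{R}^n$ closed convex, $f:Q\to\mathbb{R}$ convex, continuous, differentiable with $\|\nabla f(x)-\nabla f(y)\|_*\le L\|x-y\|$ on $Q$, $h$ convex on $Q$, and let $F=f+h$ attain its minimum over $Q$ at $x_*$. Let $d$ be a prox-function with Bregman divergence $V$, $x_0\in Q$, $V(x_*,x_0)\le R^2$. Suppose only a $(\delta,L)$-oracle for $f$ is available and run the mirror triangle method with inexact $(\delta,L)$-oracle (see context) with starting point $x_0$, $N\ge1$ steps, the value $\delta$, and $0<L_0\le L$. Then $$F(x_N)-F(x_* )\le\frac{8LR^2}{(N+1)^2}+2N\delta.$$
   Context: $\|\lambda\|_*=\max_{\|\nu\|\le1}\langle\lambda,\nu\rangle$. Prox-function: continuously differentiable $d:Q\to\mathbb{R}$, $1$-strongly convex w.r.t. $\|\cdot\|$; $V(x,y)=d(x)-d(y)-\langle\nabla d(y),x-y\rangle$. A $(\delta,L)$-oracle returns for each query point $y\in Q$ a pair $(f_\delta(y),\nabla f_\delta(y))\in\mathbb{R}\times\mathbb{R}^n$ with $0\le f(x)-f_\delta(y)-\langle\nabla f_\delta(y),x-y\rangle\le\frac L2\|x-y\|^2+\delta$ for all $x\in Q$. Method: $y_0=u_0=x_0$, $L_1=L_0/2$, $\alpha_0=A_0=0$. Step $k+1$ ($k=0,\dots,N-1$) with current $L_{k+1}$: (i) $\alpha_{k+1}$ is the largest root of $A_k+\alpha=L_{k+1}\alpha^2$, $A_{k+1}=A_k+\alpha_{k+1}$;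 (ii) $y_{k+1}=(\alpha_{k+1}u_k+A_kx_k)/A_{k+1}$; (iii) $u_{k+1}=\arg\min_{x\in Q}\{V(x,u_k)+\alpha_{k+1}(f_\delta(y_{k+1})+\langle\nabla f_\delta(y_{k+1}),x-y_{k+1}\rangle+h(x))\}$; (iv) $x_{k+1}=(\alpha_{k+1}u_{k+1}+A_kx_k)/A_{k+1}$; (v) if $f_\delta(x_{k+1})\le f_\delta(y_{k+1})+\langle\nabla f_\delta(y_{k+1}),x_{k+1}-y_{k+1}\rangle+\frac{L_{k+1}}2\|x_{k+1}-y_{k+1}\|^2+\delta$, set $L_{k+2}=L_{k+1}/2$ and go to the next step; otherwise replace $L_{k+1}$ by $2L_{k+1}$ and repeat step $k+1$ from (i). *)

theory Defs
  imports "HOL-Analysis.Analysis"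
begin

definition is_norm :: "('a::real_vector \<Rightarrow> real) \<Rightarrow> bool" where
  "is_norm nrm \<longleftrightarrow> (\<forall>x. nrm x = 0 \<longleftrightarrow> x = 0) \<and> (\<forall>c x. nrm (c *\<^sub>R x) = \<bar>c\<bar> * nrm x)
     \<and> (\<forall>x y. nrm (x + y) \<le> nrm x + nrm y)"

definition dual_norm :: "('a::real_inner \<Rightarrow> real) \<Rightarrow> 'a \<Rightarrow> real" where
  "dual_norm nrm l = (SUP v\<in>{v. nrm v \<le> 1}. inner l v)"

definition strongly_convex_wrt :: "('a::real_vector \<Rightarrow> real) \<Rightarrow> 'a set \<Rightarrow> ('a \<Rightarrow> real) \<Rightarrow> bool" where
  "strongly_convex_wrt nrm Q d \<longleftrightarrow> (\<forall>x\<in>Q. \<forall>y\<in>Q. \<forall>t::real. 0 \<le> t \<and> t \<le> 1 \<longrightarrow>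
      d (t *\<^sub>R x + (1 - t) *\<^sub>R y) \<le> t * d x + (1 - t) * d y - t * (1 - t) / 2 * (nrm (x - y))\<^sup>2)"

definition prox_function :: "('a::real_inner \<Rightarrow> real) \<Rightarrow> 'a set \<Rightarrow> ('a \<Rightarrow> real) \<Rightarrow> ('a \<Rightarrow> 'a) \<Rightarrow> bool" where
  "prox_function nrm Q d gd \<longleftrightarrow>
     (\<forall>y\<in>Q. (d has_derivative (\<lambda>v. inner (gd y) v)) (at y within Q))
     \<and> continuous_on Q gd \<and> strongly_convex_wrt nrm Q d"

definition bregman :: "('a::real_inner \<Rightarrow> real) \<Rightarrow> ('a \<Rightarrow> 'a) \<Rightarrow> 'a \<Rightarrow> 'a \<Rightarrow> real" where
  "bregman d gd x y = d x - d y - inner (gd y) (x - y)"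

definition dL_oracle :: "('a::real_inner \<Rightarrow> real) \<Rightarrow> 'a set \<Rightarrow> ('a \<Rightarrow> real) \<Rightarrow> real \<Rightarrow> real
    \<Rightarrow> ('a \<Rightarrow> real) \<Rightarrow> ('a \<Rightarrow> 'a) \<Rightarrow> bool" where
  "dL_oracle nrm Q f \<delta> L fd gfd \<longleftrightarrow> (\<forall>y\<in>Q. \<forall>x\<in>Q.
      0 \<le> f x - fd y - inner (gfd y) (x - y) \<and>
      f x - fd y - inner (gfd y) (x - y) \<le> L / 2 * (nrm (x - y))\<^sup>2 + \<delta>)"

text \<open>One trial of step k+1 (items (i)-(iv)) with trial constant Lt, from state (Ak, xk, uk),
  producing alpha, A', y, u', x'.  V = Bregman divergence.\<close>
definition mtm_trial :: "'a set \<Rightarrow> ('a::real_inner \<Rightarrow> 'a \<Rightarrow> real) \<Rightarrow> ('a \<Rightarrow> real) \<Rightarrow> ('a \<Rightarrow> 'a)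
    \<Rightarrow> ('a \<Rightarrow> real) \<Rightarrow> real \<Rightarrow> 'a \<Rightarrow> 'a \<Rightarrow> real
    \<Rightarrow> real \<Rightarrow> real \<Rightarrow> 'a \<Rightarrow> 'a \<Rightarrow> 'a \<Rightarrow> bool" where
  "mtm_trial Q V fd gfd h Ak xk uk Lt \<alpha> A' y u' x' \<longleftrightarrow>
     (Ak + \<alpha> = Lt * \<alpha>\<^sup>2 \<and> (\<forall>\<beta>. Ak + \<beta> = Lt * \<beta>\<^sup>2 \<longrightarrow> \<beta> \<le> \<alpha>))
     \<and> A' = Ak + \<alpha>
     \<and> y = (1 / A') *\<^sub>R (\<alpha> *\<^sub>R uk + Ak *\<^sub>R xk)
     \<and> u' \<in> Q
     \<and> (\<forall>z\<in>Q. V u' uk + \<alpha> * (fd y + inner (gfd y) (u' - y) + h u')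
               \<le> V z uk + \<alpha> * (fd y + inner (gfd y) (z - y) + h z))
     \<and> x' = (1 / A') *\<^sub>R (\<alpha> *\<^sub>R u' + Ak *\<^sub>R xk)"

definition mtm_accept :: "('a::real_inner \<Rightarrow> real) \<Rightarrow> ('a \<Rightarrow> real) \<Rightarrow> ('a \<Rightarrow> 'a) \<Rightarrow> real \<Rightarrow> real
    \<Rightarrow> 'a \<Rightarrow> 'a \<Rightarrow> bool" where
  "mtm_accept nrm fd gfd \<delta> Lt y x' \<longleftrightarrow>
     fd x' \<le> fd y + inner (gfd y) (x' - y) + Lt / 2 * (nrm (x' - y))\<^sup>2 + \<delta>"

end

theory Submission imports Defs begin

text \<open>Each accepted step satisfies the estimate-sequence inequality
  \<open>A\<^sub>k\<^sub>+\<^sub>1 (F x\<^sub>k\<^sub>+\<^sub>1 - F x\<^sub>*) \<le> A\<^sub>k (F x\<^sub>k - F x\<^sub>*) + V(x\<^sub>*, u\<^sub>k) - V(x\<^sub>*, u\<^sub>k\<^sub>+\<^sub>1) + 2 \<delta> A\<^sub>k\<^sub>+\<^sub>1\<close>: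
  the oracle and the acceptance test bound \<open>F x\<^sub>k\<^sub>+\<^sub>1\<close> by a linear model plus a quadratic term,
  the three-point property of the Bregman prox step controls the linear model, and the relation
  \<open>L\<^sub>k\<^sub>+\<^sub>1 \<alpha>\<^sub>k\<^sub>+\<^sub>1\<^sup>2 = A\<^sub>k\<^sub>+\<^sub>1\<close> makes the quadratic term cancel against the strong convexity of \<open>d\<close>.
  Telescoping gives \<open>A\<^sub>N (F x\<^sub>N - F x\<^sub>*) \<le> R\<^sup>2 + 2 N \<delta> A\<^sub>N\<close>.  Backtracking stops at the latest
  when the trial constant reaches \<open>L\<close>, so accepted constants are at most \<open>2 L\<close>, and then the
  same relation forces \<open>A\<^sub>N \<ge> (N + 1)\<^sup>2 / (8 L)\<close>.\<close>

lemma is_norm_zero [simp]: "is_norm nrm \<Longrightarrow> nrm 0 = 0"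
  and is_norm_scaleR [simp]: "is_norm nrm \<Longrightarrow> nrm (c *\<^sub>R v) = \<bar>c\<bar> * nrm v"
  unfolding is_norm_def by auto

lemma directional_quotient_tendsto:
  fixes d :: "'a::real_inner \<Rightarrow> real"
  assumes der: "\<forall>y\<in>Q. (d has_derivative (\<lambda>v. inner (gd y) v)) (at y within Q)"
    and Q: "convex Q" and y: "y \<in> Q" and x: "x \<in> Q"
  shows "((\<lambda>t. (d (y + t *\<^sub>R (x - y)) - d y) / t) \<longlongrightarrow> inner (gd y) (x - y)) (at_right 0)"
proof -
  have path: "((\<lambda>t. y + t *\<^sub>R (x - y)) has_derivative (\<lambda>t. t *\<^sub>R (x - y))) (at 0 within {0..1})"
    by (auto intro!: derivative_eq_intros)
  have segment: "(\<lambda>t. y + t *\<^sub>R (x - y)) ` {0..1} \<subseteq> Q"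
  proof
    fix w assume "w \<in> (\<lambda>t. y + t *\<^sub>R (x - y)) ` {0..(1::real)}"
    then obtain t where t: "0 \<le> t" "t \<le> 1" "w = (1 - t) *\<^sub>R y + t *\<^sub>R x"
      by (auto simp: algebra_simps)
    then show "w \<in> Q" using Q x y by (simp add: convexD)
  qed
  have "((\<lambda>t. d (y + t *\<^sub>R (x - y))) has_derivative
      (\<lambda>t. inner (gd (y + 0 *\<^sub>R (x - y))) (t *\<^sub>R (x - y)))) (at 0 within {0..1})"
    by (rule has_derivative_in_compose2[OF _ segment _ path]) (use der in auto)
  then have "((\<lambda>t. d (y + t *\<^sub>R (x - y))) has_field_derivative inner (gd y) (x - y))
      (at 0 within {0..1})"
    by (simp add: has_field_derivative_def mult_commute_abs)
  then have "((\<lambda>t. (d (y + t *\<^sub>R (x - y)) - d y) / t) \<longlongrightarrow> inner (gd y) (x - y))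
      (at 0 within {0..1})"
    by (simp add: has_field_derivative_iff)
  then show ?thesis by (simp add: at_within_Icc_at_right)
qed

lemma tendsto_le_at_right_0:
  fixes g k :: "real \<Rightarrow> real"
  assumes "(g \<longlongrightarrow> a) (at_right 0)" "(k \<longlongrightarrow> b) (at_right 0)"
    and "\<And>t. 0 < t \<Longrightarrow> t < 1 \<Longrightarrow> g t \<le> k t"
  shows "a \<le> b"
proof (rule tendsto_le[OF _ assms(2) assms(1)])
  show "\<forall>\<^sub>F t in at_right 0. g t \<le> k t"
    unfolding eventually_at_right[OF zero_less_one] using assms(3) by (intro exI[of _ 1]) auto
qed simp

lemma bregman_ge_half_sq:
  fixes d :: "'a::real_inner \<Rightarrow> real"
  assumes prox: "prox_function nrm Q d gd" and Q: "convex Q" and y: "y \<in> Q" and x: "x \<in> Q"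
  shows "(nrm (x - y))\<^sup>2 / 2 \<le> bregman d gd x y"
proof -
  have der: "\<forall>y\<in>Q. (d has_derivative (\<lambda>v. inner (gd y) v)) (at y within Q)"
    and sc: "strongly_convex_wrt nrm Q d"
    using prox by (auto simp: prox_function_def)
  let ?n = "(nrm (x - y))\<^sup>2"
  have lim: "((\<lambda>t::real. d x - d y - (1 - t) / 2 * ?n) \<longlongrightarrow> d x - d y - (1 - 0) / 2 * ?n)
      (at_right 0)"
    by (intro tendsto_intros) auto
  have "inner (gd y) (x - y) \<le> d x - d y - (1 - 0) / 2 * ?n"
  proof (rule tendsto_le_at_right_0[OF directional_quotient_tendsto[OF der Q y x] lim])
    fix t :: real assume t: "0 < t" "t < 1"
    have "y + t *\<^sub>R (x - y) = t *\<^sub>R x + (1 - t) *\<^sub>R y" by (simp add: algebra_simps)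
    then have "d (y + t *\<^sub>R (x - y)) \<le> t * d x + (1 - t) * d y - t * (1 - t) / 2 * ?n"
      using sc x y t unfolding strongly_convex_wrt_def by auto
    then have "d (y + t *\<^sub>R (x - y)) - d y \<le> t * (d x - d y - (1 - t) / 2 * ?n)"
      by (simp add: algebra_simps)
    then show "(d (y + t *\<^sub>R (x - y)) - d y) / t \<le> d x - d y - (1 - t) / 2 * ?n"
      using t by (simp add: divide_le_eq mult.commute)
  qed
  then show ?thesis by (simp add: bregman_def)
qed

lemma bregman_nonneg:
  fixes d :: "'a::real_inner \<Rightarrow> real"
  assumes "prox_function nrm Q d gd" "convex Q" "y \<in> Q" "x \<in> Q"
  shows "0 \<le> bregman d gd x y"
  by (rule order_trans[OF _ bregman_ge_half_sq[OF assms]]) simp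

lemma bregman_three_point:
  fixes d :: "'a::real_inner \<Rightarrow> real"
  assumes prox: "prox_function nrm Q d gd" and Q: "convex Q"
    and \<psi>: "convex_on Q \<psi>"
    and uk: "uk \<in> Q" and u: "u \<in> Q" and z: "z \<in> Q"
    and min: "\<forall>w\<in>Q. bregman d gd u uk + \<psi> u \<le> bregman d gd w uk + \<psi> w"
  shows "bregman d gd u uk + \<psi> u + bregman d gd z u \<le> bregman d gd z uk + \<psi> z"
proof -
  have der: "\<forall>y\<in>Q. (d has_derivative (\<lambda>v. inner (gd y) v)) (at y within Q)"
    using prox by (auto simp: prox_function_def)
  let ?c = "inner (gd uk) (z - u) - (\<psi> z - \<psi> u)"
  have "?c \<le> inner (gd u) (z - u)"
  proof (rule tendsto_le_at_right_0[OF tendsto_const directional_quotient_tendsto[OF der Q u z]])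
    fix t :: real assume t: "0 < t" "t < 1"
    define w where "w = u + t *\<^sub>R (z - u)"
    have w: "w = (1 - t) *\<^sub>R u + t *\<^sub>R z" unfolding w_def by (simp add: algebra_simps)
    have "bregman d gd u uk + \<psi> u \<le> bregman d gd w uk + \<psi> w"
      using min Q u z t by (simp add: w convexD)
    moreover have "\<psi> w \<le> (1 - t) * \<psi> u + t * \<psi> z"
      using convex_onD[OF \<psi>, of t u z] u z t by (simp add: w)
    moreover have "bregman d gd w uk - bregman d gd u uk = d w - d u - t * inner (gd uk) (z - u)"
      by (simp add: w_def bregman_def inner_diff_right inner_add_right algebra_simps)
    ultimately have "t * ?c \<le> d w - d u"
      by (simp add: algebra_simps)
    then show "?c \<le> (d (u + t *\<^sub>R (z - u)) - d u) / t"
      using t by (simp add: w_def le_divide_eq mult.commute)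
  qed
  moreover have "bregman d gd z uk - bregman d gd u uk - bregman d gd z u
      = inner (gd u) (z - u) - inner (gd uk) (z - u)"
    by (simp add: bregman_def inner_diff_right algebra_simps)
  ultimately show ?thesis by linarith
qed

lemma dL_oracle_exact_bounds:
  assumes orcl: "dL_oracle nrm Q f \<delta> L fd gfd" and nrm: "is_norm nrm" and x: "x \<in> Q"
  shows "fd x \<le> f x" "f x \<le> fd x + \<delta>"
  using orcl x nrm unfolding dL_oracle_def by (fastforce simp: power2_eq_square)+

lemma dL_oracle_linear_le:
  assumes "dL_oracle nrm Q f \<delta> L fd gfd" "y \<in> Q" "x \<in> Q"
  shows "fd y + inner (gfd y) (x - y) \<le> f x"
  using assms unfolding dL_oracle_def by fastforce

lemma mtm_trial_facts:
  assumes tr: "mtm_trial Q V fd gfd h Ak xk uk Lt \<alpha> A' y u' x'"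
    and Lt: "0 < Lt" and Ak: "0 \<le> Ak" and xk: "xk \<in> Q" and uk: "uk \<in> Q" and Q: "convex Q"
  shows "0 < \<alpha>" "A' = Ak + \<alpha>" "Lt * \<alpha>\<^sup>2 = A'" "u' \<in> Q"
    "y = (1 - \<alpha> / A') *\<^sub>R xk + (\<alpha> / A') *\<^sub>R uk"
    "x' = (1 - \<alpha> / A') *\<^sub>R xk + (\<alpha> / A') *\<^sub>R u'"
    "x' - y = (\<alpha> / A') *\<^sub>R (u' - uk)"
    "y \<in> Q" "x' \<in> Q"
    "\<forall>z\<in>Q. V u' uk + \<alpha> * (fd y + inner (gfd y) (u' - y) + h u')
               \<le> V z uk + \<alpha> * (fd y + inner (gfd y) (z - y) + h z)"
proof -
  have eq: "Ak + \<alpha> = Lt * \<alpha>\<^sup>2" and largest: "\<forall>\<beta>. Ak + \<beta> = Lt * \<beta>\<^sup>2 \<longrightarrow> \<beta> \<le> \<alpha>"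
    and A': "A' = Ak + \<alpha>" and y: "y = (1 / A') *\<^sub>R (\<alpha> *\<^sub>R uk + Ak *\<^sub>R xk)"
    and u': "u' \<in> Q" and x': "x' = (1 / A') *\<^sub>R (\<alpha> *\<^sub>R u' + Ak *\<^sub>R xk)"
    and prox_step: "\<forall>z\<in>Q. V u' uk + \<alpha> * (fd y + inner (gfd y) (u' - y) + h u')
               \<le> V z uk + \<alpha> * (fd y + inner (gfd y) (z - y) + h z)"
    using tr unfolding mtm_trial_def by blast+
  define \<beta> where "\<beta> = (1 + sqrt (1 + 4 * Lt * Ak)) / (2 * Lt)"
  have "Lt * \<beta>\<^sup>2 = Ak + \<beta>"
    using Lt Ak unfolding \<beta>_def by (simp add: field_simps power2_eq_square)
  then have "\<beta> \<le> \<alpha>" using largest by auto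
  moreover have "0 < \<beta>" using Lt Ak unfolding \<beta>_def by (intro divide_pos_pos add_pos_nonneg) auto
  ultimately show \<alpha>: "0 < \<alpha>" by simp
  show "A' = Ak + \<alpha>" "Lt * \<alpha>\<^sup>2 = A'" "u' \<in> Q" using A' eq u' by auto
  have "0 < A'" using A' \<alpha> Ak by simp
  then have t: "1 - \<alpha> / A' = Ak / A'" "0 \<le> \<alpha> / A'" "\<alpha> / A' \<le> 1"
    using A' \<alpha> Ak by (auto simp: field_simps)
  show ye: "y = (1 - \<alpha> / A') *\<^sub>R xk + (\<alpha> / A') *\<^sub>R uk"
    unfolding t(1) y by (simp add: scaleR_add_right divide_inverse_commute)
  show xe: "x' = (1 - \<alpha> / A') *\<^sub>R xk + (\<alpha> / A') *\<^sub>R u'"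
    unfolding t(1) x' by (simp add: scaleR_add_right divide_inverse_commute)
  show "x' - y = (\<alpha> / A') *\<^sub>R (u' - uk)" unfolding xe ye by (simp add: algebra_simps)
  show "y \<in> Q" unfolding ye by (rule convexD_alt[OF Q xk uk t(2,3)])
  show "x' \<in> Q" unfolding xe by (rule convexD_alt[OF Q xk u' t(2,3)])
  show "\<forall>z\<in>Q. V u' uk + \<alpha> * (fd y + inner (gfd y) (u' - y) + h u')
               \<le> V z uk + \<alpha> * (fd y + inner (gfd y) (z - y) + h z)" by (rule prox_step)
qed

lemma mtm_accept_if_ge_L:
  assumes orcl: "dL_oracle nrm Q f \<delta> L fd gfd" and nrm: "is_norm nrm"
    and y: "y \<in> Q" and x': "x' \<in> Q" and LLt: "L \<le> Lt"
  shows "mtm_accept nrm fd gfd \<delta> Lt y x'"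
proof -
  have "f x' - fd y - inner (gfd y) (x' - y) \<le> L / 2 * (nrm (x' - y))\<^sup>2 + \<delta>"
    using orcl x' y unfolding dL_oracle_def by blast
  moreover have "L / 2 * (nrm (x' - y))\<^sup>2 \<le> Lt / 2 * (nrm (x' - y))\<^sup>2"
    using LLt by (intro mult_right_mono) auto
  ultimately show ?thesis
    using dL_oracle_exact_bounds(1)[OF orcl nrm x'] unfolding mtm_accept_def by linarith
qed

lemma affine_combination_inner:
  fixes g y a b :: "'a::real_inner"
  shows "inner g ((1 - s) *\<^sub>R a + s *\<^sub>R b - y) = (1 - s) * inner g (a - y) + s * inner g (b - y)"
proof -
  have "(1 - s) *\<^sub>R a + s *\<^sub>R b - y = (1 - s) *\<^sub>R (a - y) + s *\<^sub>R (b - y)"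
    by (simp add: algebra_simps)
  then show ?thesis by (simp add: inner_add_right)
qed

lemma convex_on_affine_inner:
  fixes g y :: "'a::real_inner"
  assumes "convex S"
  shows "convex_on S (\<lambda>z. c + inner g (z - y))"
  by (rule convex_onI[OF _ assms]) (simp add: affine_combination_inner algebra_simps)

lemma mtm_trial_accepted_upper:
  assumes tr: "mtm_trial Q V fd gfd h Ak xk uk Lt \<alpha> A' y u' x'"
    and Lt: "0 < Lt" and Ak: "0 \<le> Ak" and xk: "xk \<in> Q" and uk: "uk \<in> Q" and Q: "convex Q"
    and acc: "mtm_accept nrm fd gfd \<delta> Lt y x'"
    and nrm: "is_norm nrm" and orcl: "dL_oracle nrm Q f \<delta> L fd gfd"
  shows "A' * f x' \<le> A' * (fd y + inner (gfd y) (x' - y)) + (nrm (u' - uk))\<^sup>2 / 2 + 2 * \<delta> * A'"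
proof -
  note T = mtm_trial_facts[OF tr Lt Ak xk uk Q]
  define t where "t = \<alpha> / A'"
  have A': "0 < A'" "A' * t = \<alpha>" "0 \<le> t" using T(1,2) Ak unfolding t_def by auto
  have "f x' \<le> fd y + inner (gfd y) (x' - y) + Lt / 2 * (nrm (x' - y))\<^sup>2 + 2 * \<delta>"
    using dL_oracle_exact_bounds(2)[OF orcl nrm T(9)] acc unfolding mtm_accept_def by simp
  then have "A' * f x' \<le> A' * (fd y + inner (gfd y) (x' - y)) + A' * (Lt / 2 * (nrm (x' - y))\<^sup>2) + 2 * \<delta> * A'"
    using A'(1) mult_left_mono by (fastforce simp: algebra_simps)
  text \<open>Since \<open>x' - y = t (u' - uk)\<close> and \<open>Lt (A' t)\<^sup>2 = A'\<close>, the quadratic term of the acceptance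
    test becomes the strong convexity bound \<open>\<parallel>u' - uk\<parallel>\<^sup>2 / 2\<close> of the Bregman divergence.\<close>
  moreover have "A' * (Lt / 2 * (nrm (x' - y))\<^sup>2) = (nrm (u' - uk))\<^sup>2 / 2"
  proof -
    have "nrm (x' - y) = t * nrm (u' - uk)" using T(7) nrm A'(3) by (simp add: t_def[symmetric])
    then have "A' * (Lt / 2 * (nrm (x' - y))\<^sup>2) = Lt * (A' * t)\<^sup>2 / A' / 2 * (nrm (u' - uk))\<^sup>2"
      using A'(1) by (simp add: power2_eq_square field_simps)
    then show ?thesis using T(3) A'(1,2) by simp
  qed
  ultimately show ?thesis by simp
qed

lemma mtm_trial_step_estimate:
  fixes d :: "'a::real_inner \<Rightarrow> real"
  assumes tr: "mtm_trial Q (bregman d gd) fd gfd h Ak xk uk Lt \<alpha> A' y u' x'"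
    and Lt: "0 < Lt" and Ak: "0 \<le> Ak" and xk: "xk \<in> Q" and uk: "uk \<in> Q" and Q: "convex Q"
    and acc: "mtm_accept nrm fd gfd \<delta> Lt y x'"
    and nrm: "is_norm nrm" and orcl: "dL_oracle nrm Q f \<delta> L fd gfd"
    and hc: "convex_on Q h" and prox: "prox_function nrm Q d gd" and xs: "xs \<in> Q"
  shows "A' * (f x' + h x') \<le> Ak * (f xk + h xk) + \<alpha> * (f xs + h xs)
     + bregman d gd xs uk - bregman d gd xs u' + 2 * \<delta> * A'"
proof -
  note T = mtm_trial_facts[OF tr Lt Ak xk uk Q]
  let ?V = "bregman d gd"
  define l where "l z = fd y + inner (gfd y) (z - y)" for z
  define \<psi> where "\<psi> z = \<alpha> * (l z + h z)" for z
  define t where "t = \<alpha> / A'"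
  have \<alpha>: "0 < \<alpha>" and u': "u' \<in> Q" and xe: "x' = (1 - t) *\<^sub>R xk + t *\<^sub>R u'"
    and prox_step: "\<forall>z\<in>Q. ?V u' uk + \<psi> u' \<le> ?V z uk + \<psi> z"
    using T unfolding t_def l_def \<psi>_def by auto
  have A': "0 < A'" using T(2) \<alpha> Ak by simp
  have t: "0 \<le> t" "t \<le> 1" "A' * t = \<alpha>" "A' * (1 - t) = Ak"
    using A' \<alpha> T(2) Ak unfolding t_def by (auto simp: field_simps)
  have l_convex: "convex_on Q l" unfolding l_def by (rule convex_on_affine_inner[OF Q])
  have model_x': "l x' + h x' \<le> (1 - t) * (l xk + h xk) + t * (l u' + h u')"
    using convex_onD[OF convex_on_add[OF l_convex hc] t(1,2) xk u'] unfolding xe .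
  have l_le: "l xk \<le> f xk" "l xs \<le> f xs"
    using dL_oracle_linear_le[OF orcl T(8)] xk xs unfolding l_def by auto
  have "convex_on Q \<psi>"
    unfolding \<psi>_def using \<alpha> l_convex hc by (intro convex_on_cmul convex_on_add) auto
  then have three_point: "?V u' uk + \<psi> u' + ?V xs u' \<le> ?V xs uk + \<psi> xs"
    by (rule bregman_three_point[OF prox Q _ uk u' xs prox_step])
  have "A' * (f x' + h x') \<le> A' * (l x' + h x') + (nrm (u' - uk))\<^sup>2 / 2 + 2 * \<delta> * A'"
    using mtm_trial_accepted_upper[OF tr Lt Ak xk uk Q acc nrm orcl] unfolding l_def
    by (simp add: algebra_simps)
  also have "\<dots> \<le> (A' * (1 - t)) * (l xk + h xk) + (A' * t) * (l u' + h u')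
      + (nrm (u' - uk))\<^sup>2 / 2 + 2 * \<delta> * A'"
    using mult_left_mono[OF model_x', of A'] A' by (simp add: algebra_simps)
  also have "\<dots> = Ak * (l xk + h xk) + \<psi> u' + (nrm (u' - uk))\<^sup>2 / 2 + 2 * \<delta> * A'"
    unfolding t(3,4) \<psi>_def ..
  also have "\<dots> \<le> Ak * (l xk + h xk) + ?V xs uk + \<psi> xs - ?V xs u' + 2 * \<delta> * A'"
    using three_point bregman_ge_half_sq[OF prox Q uk u'] by simp
  also have "\<dots> \<le> Ak * (f xk + h xk) + \<alpha> * (f xs + h xs) + ?V xs uk - ?V xs u' + 2 * \<delta> * A'"
    using mult_left_mono[OF l_le(1) Ak] mult_left_mono[OF l_le(2) less_imp_le[OF \<alpha>]]
    unfolding \<psi>_def by (simp add: algebra_simps)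
  finally show ?thesis .
qed

lemma mtm_backtracking_constant_le:
  assumes trials: "\<forall>i\<le>J. mtm_trial Q V fd gfd h Ak xk uk (Lk * 2 ^ i) (t\<alpha> i) (tA i) (ty i) (tu i) (tx i)"
    and rejected: "\<forall>i<J. \<not> mtm_accept nrm fd gfd \<delta> (Lk * 2 ^ i) (ty i) (tx i)"
    and state: "xk \<in> Q" "uk \<in> Q" "0 \<le> Ak" "0 < Lk" "Lk \<le> L"
    and Q: "convex Q" and nrm: "is_norm nrm" and orcl: "dL_oracle nrm Q f \<delta> L fd gfd"
  shows "Lk * 2 ^ J \<le> 2 * L"
proof (cases J)
  case 0
  then show ?thesis using state by simp
next
  case (Suc j)
  have "Lk * 2 ^ j < L"
  proof (rule ccontr)
    assume "\<not> Lk * 2 ^ j < L"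
    moreover have "mtm_trial Q V fd gfd h Ak xk uk (Lk * 2 ^ j) (t\<alpha> j) (tA j) (ty j) (tu j) (tx j)"
      using trials Suc by simp
    note T = mtm_trial_facts[OF this _ state(3,1,2) Q]
    ultimately have "mtm_accept nrm fd gfd \<delta> (Lk * 2 ^ j) (ty j) (tx j)"
      using state(4) by (intro mtm_accept_if_ge_L[OF orcl nrm T(8,9)]) auto
    then show False using rejected Suc by simp
  qed
  then show ?thesis using Suc by simp
qed

lemma mtm_outer_step:
  fixes d :: "'a::real_inner \<Rightarrow> real"
  assumes trials: "\<forall>i\<le>J. mtm_trial Q (bregman d gd) fd gfd h Ak xk uk (Lk * 2 ^ i)
                     (t\<alpha> i) (tA i) (ty i) (tu i) (tx i)"
    and rejected: "\<forall>i<J. \<not> mtm_accept nrm fd gfd \<delta> (Lk * 2 ^ i) (ty i) (tx i)"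
    and accepted: "mtm_accept nrm fd gfd \<delta> (Lk * 2 ^ J) (ty J) (tx J)"
    and state: "xk \<in> Q" "uk \<in> Q" "0 \<le> Ak" "0 < Lk" "Lk \<le> L"
    and Q: "convex Q" and nrm: "is_norm nrm" and orcl: "dL_oracle nrm Q f \<delta> L fd gfd"
    and hc: "convex_on Q h" and prox: "prox_function nrm Q d gd" and xs: "xs \<in> Q"
  shows "tx J \<in> Q" "tu J \<in> Q" "Ak < tA J" "0 < Lk * 2 ^ J" "Lk * 2 ^ J \<le> 2 * L"
    "Lk * 2 ^ J * (tA J - Ak)\<^sup>2 = tA J"
    "tA J * (f (tx J) + h (tx J) - (f xs + h xs))
       \<le> Ak * (f xk + h xk - (f xs + h xs)) + bregman d gd xs uk - bregman d gd xs (tu J) + 2 * \<delta> * tA J"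
proof -
  have tr: "mtm_trial Q (bregman d gd) fd gfd h Ak xk uk (Lk * 2 ^ J) (t\<alpha> J) (tA J) (ty J) (tu J) (tx J)"
    using trials by simp
  show pos: "0 < Lk * 2 ^ J" using state by simp
  note T = mtm_trial_facts[OF tr pos state(3,1,2) Q]
  show "tx J \<in> Q" "tu J \<in> Q" "Ak < tA J" "Lk * 2 ^ J * (tA J - Ak)\<^sup>2 = tA J"
    using T by auto
  show "Lk * 2 ^ J \<le> 2 * L"
    by (rule mtm_backtracking_constant_le[OF trials rejected state Q nrm orcl])
  show "tA J * (f (tx J) + h (tx J) - (f xs + h xs))
       \<le> Ak * (f xk + h xk - (f xs + h xs)) + bregman d gd xs uk - bregman d gd xs (tu J) + 2 * \<delta> * tA J"
    using mtm_trial_step_estimate[OF tr pos state(3,1,2) Q accepted nrm orcl hc prox xs] T(2)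
    by (simp add: algebra_simps)
qed

lemma telescoped_estimate:
  fixes A e P :: "nat \<Rightarrow> real"
  assumes A0: "A 0 = 0" and \<delta>: "0 \<le> \<delta>"
    and step: "\<And>k. k < N \<Longrightarrow> A (Suc k) * e (Suc k) \<le> A k * e k + P k - P (Suc k) + 2 * \<delta> * A (Suc k)"
    and mono: "\<And>k. k < N \<Longrightarrow> A k \<le> A (Suc k)"
  shows "A N * e N \<le> P 0 - P N + 2 * \<delta> * real N * A N"
  using step mono
proof (induction N)
  case 0
  then show ?case using A0 by simp
next
  case (Suc N)
  then have "A N * e N \<le> P 0 - P N + 2 * \<delta> * real N * A N" by simp
  moreover have "\<delta> * real N * A N \<le> \<delta> * real N * A (Suc N)"
    using Suc.prems(2) \<delta> by (simp add: mult_left_mono)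
  ultimately show ?case using Suc.prems(1)[of N] by (simp add: algebra_simps)
qed

lemma quadratic_growth_step:
  fixes M Lt a \<alpha> k :: real
  assumes M: "0 < M" and Lt: "0 < Lt" "Lt \<le> M" and \<alpha>: "0 < \<alpha>" and eq: "Lt * \<alpha>\<^sup>2 = a + \<alpha>"
    and k: "0 \<le> k" and a: "(k + 1)\<^sup>2 / (4 * M) \<le> a"
  shows "(k + 2)\<^sup>2 / (4 * M) \<le> a + \<alpha>"
proof -
  have \<alpha>_ge: "(k + 2) / (2 * M) \<le> \<alpha>"
  proof (rule ccontr)
    assume "\<not> ?thesis"
    then have lt: "\<alpha> < (k + 2) / (2 * M)" by simp
    have "M * \<alpha>\<^sup>2 \<ge> a + \<alpha>" using eq Lt \<alpha> by (metis mult_right_mono zero_le_power2)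
    moreover have "M * \<alpha>\<^sup>2 < \<alpha> * (k + 2) / 2"
    proof -
      have "M * \<alpha> < (k + 2) / 2" using lt M by (simp add: field_simps)
      then have "M * \<alpha> * \<alpha> < (k + 2) / 2 * \<alpha>" using \<alpha> by (simp add: mult_strict_right_mono)
      then show ?thesis by (simp add: power2_eq_square algebra_simps)
    qed
    ultimately have "a < \<alpha> * k / 2" by (simp add: algebra_simps)
    moreover have "\<alpha> * k / 2 \<le> (k + 2) / (2 * M) * k / 2"
    proof -
      have "\<alpha> * k \<le> (k + 2) / (2 * M) * k" using lt k by (intro mult_right_mono) auto
      then show ?thesis by (simp add: mult.commute)
    qed
    moreover have "(k + 2) / (2 * M) * k / 2 \<le> (k + 1)\<^sup>2 / (4 * M)"
      using M by (simp add: field_simps power2_eq_square)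
    ultimately show False using a by linarith
  qed
  have "(k + 2)\<^sup>2 \<le> (k + 1)\<^sup>2 + 2 * (k + 2)" by (simp add: power2_eq_square algebra_simps)
  then have "(k + 2)\<^sup>2 / (4 * M) \<le> ((k + 1)\<^sup>2 + 2 * (k + 2)) / (4 * M)"
    using M by (intro divide_right_mono) auto
  also have "\<dots> = (k + 1)\<^sup>2 / (4 * M) + (k + 2) / (2 * M)"
    using M by (simp add: field_simps)
  finally show ?thesis using \<alpha>_ge a by linarith
qed

lemma quadratic_growth:
  fixes A Lp :: "nat \<Rightarrow> real"
  assumes A0: "A 0 = 0" and M: "0 < M" and N: "1 \<le> N"
    and eq: "\<And>k. k < N \<Longrightarrow> Lp k * (A (Suc k) - A k)\<^sup>2 = A (Suc k)"
    and Lp: "\<And>k. k < N \<Longrightarrow> 0 < Lp k" "\<And>k. k < N \<Longrightarrow> Lp k \<le> M"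
    and incr: "\<And>k. k < N \<Longrightarrow> A k < A (Suc k)"
  shows "(real N + 1)\<^sup>2 / (4 * M) \<le> A N"
  using N eq Lp incr
proof (induction N rule: dec_induct)
  case base
  have "Lp 0 * A 1 * A 1 = A 1" "0 < A 1" using base.prems(1,4)[of 0] A0 by (auto simp: power2_eq_square)
  then have "A 1 = 1 / Lp 0" using base.prems(2)[of 0] by (simp add: field_simps)
  also have "\<dots> \<ge> 1 / M" using base.prems(2,3)[of 0] by (intro divide_left_mono) auto
  finally show ?case using M by simp
next
  case (step k)
  have "(real k + 2)\<^sup>2 / (4 * M) \<le> A k + (A (Suc k) - A k)"
    using step M by (intro quadratic_growth_step[where Lt = "Lp k"]) (auto simp: algebra_simps)
  then show ?case by (simp add: add.commute)
qed

lemma rate_from_estimate: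
  fixes a e R \<delta> L :: real
  assumes est: "a * e \<le> R\<^sup>2 + 2 * \<delta> * real N * a" and a: "(real N + 1)\<^sup>2 / (8 * L) \<le> a" and L: "0 < L"
  shows "e \<le> 8 * L * R\<^sup>2 / (real N + 1)\<^sup>2 + 2 * real N * \<delta>"
proof -
  have a_pos: "0 < a" using a L by (smt (verit) divide_pos_pos zero_less_power2 of_nat_less_0_iff)
  then have "e \<le> R\<^sup>2 / a + 2 * real N * \<delta>" using est by (simp add: field_simps)
  also have "R\<^sup>2 / a \<le> R\<^sup>2 / ((real N + 1)\<^sup>2 / (8 * L))"
    using a a_pos L by (intro divide_left_mono) auto
  finally show ?thesis by (simp add: ac_simps)
qed

theorem theorem3:
  fixes nrm :: "real^'n \<Rightarrow> real"
    and Q :: "(real^'n) set"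
    and f h d :: "real^'n \<Rightarrow> real"
    and gf gd :: "real^'n \<Rightarrow> real^'n"
    and fd :: "real^'n \<Rightarrow> real" and gfd :: "real^'n \<Rightarrow> real^'n"
    and L L0 R \<delta> :: real
    and xs x0 :: "real^'n"
    and N :: nat
    and J :: "nat \<Rightarrow> nat" and Lc :: "nat \<Rightarrow> real"
    and A :: "nat \<Rightarrow> real" and x u :: "nat \<Rightarrow> real^'n"
    and t\<alpha> tA :: "nat \<Rightarrow> nat \<Rightarrow> real" and ty tu tx :: "nat \<Rightarrow> nat \<Rightarrow> real^'n"
  assumes norm: "is_norm nrm"
    and Q: "closed Q" "convex Q"
    and f_convex: "convex_on Q f" and f_cont: "continuous_on Q f"
    and f_grad: "\<forall>y\<in>Q. (f has_derivative (\<lambda>v. inner (gf y) v)) (at y within Q)"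
    and f_lip: "\<forall>x\<in>Q. \<forall>y\<in>Q. dual_norm nrm (gf x - gf y) \<le> L * nrm (x - y)"
    and h_convex: "convex_on Q h"
    and xs_min: "xs \<in> Q" "\<forall>z\<in>Q. f xs + h xs \<le> f z + h z"
    and prox: "prox_function nrm Q d gd"
    and x0: "x0 \<in> Q" and R: "bregman d gd xs x0 \<le> R\<^sup>2"
    and orcl: "dL_oracle nrm Q f \<delta> L fd gfd"
    and N: "N \<ge> 1"
    and L0: "0 < L0" "L0 \<le> L"
    and init: "x 0 = x0" "u 0 = x0" "A 0 = 0" "Lc 0 = L0 / 2"
    and Lc_next: "\<forall>k<N. Lc (Suc k) = Lc k * 2 ^ J k / 2"
    and trials: "\<forall>k<N. \<forall>i\<le>J k. mtm_trial Q (bregman d gd) fd gfd h (A k) (x k) (u k)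
                     (Lc k * 2 ^ i) (t\<alpha> k i) (tA k i) (ty k i) (tu k i) (tx k i)"
    and rejected: "\<forall>k<N. \<forall>i<J k. \<not> mtm_accept nrm fd gfd \<delta> (Lc k * 2 ^ i) (ty k i) (tx k i)"
    and accepted: "\<forall>k<N. mtm_accept nrm fd gfd \<delta> (Lc k * 2 ^ J k) (ty k (J k)) (tx k (J k))"
    and next_state: "\<forall>k<N. A (Suc k) = tA k (J k) \<and> u (Suc k) = tu k (J k) \<and> x (Suc k) = tx k (J k)"
  shows "(f (x N) + h (x N)) - (f xs + h xs) \<le> 8 * L * R\<^sup>2 / (real N + 1)\<^sup>2 + 2 * real N * \<delta>"
  \<comment> \<open>The smoothness of \<open>f\<close> only serves to make a \<open>(\<delta>, L)\<close>-oracle available; the proof uses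
    the oracle inequalities alone.\<close>
proof -
  define F where "F z = f z + h z" for z
  define Lp where "Lp k = Lc k * 2 ^ J k" for k
  define inv where "inv k \<longleftrightarrow> x k \<in> Q \<and> u k \<in> Q \<and> 0 \<le> A k \<and> 0 < Lc k \<and> Lc k \<le> L" for k
  have convQ: "convex Q" using Q by simp
  have L: "0 < L" using L0 by simp
  have \<delta>: "0 \<le> \<delta>" using dL_oracle_exact_bounds[OF orcl norm x0] by simp
  have outer: "x (Suc k) \<in> Q" "u (Suc k) \<in> Q" "A k < A (Suc k)" "0 < Lp k" "Lp k \<le> 2 * L"
      "Lp k * (A (Suc k) - A k)\<^sup>2 = A (Suc k)"
      "A (Suc k) * (F (x (Suc k)) - F xs)
          \<le> A k * (F (x k) - F xs) + bregman d gd xs (u k) - bregman d gd xs (u (Suc k)) + 2 * \<delta> * A (Suc k)"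
    if k: "k < N" and "inv k" for k
    using mtm_outer_step[of "J k" Q d gd fd gfd h "A k" "x k" "u k" "Lc k", OF _ _ _ _ _ _ _ _ convQ norm
        orcl h_convex prox xs_min(1)] \<open>inv k\<close> trials rejected accepted next_state k
    unfolding F_def Lp_def inv_def by auto
  have state: "inv k" if "k \<le> N" for k
    using that
  proof (induction k)
    case 0
    then show ?case using init x0 L0 by (simp add: inv_def)
  next
    case (Suc k)
    then have k: "k < N" by simp
    then have "Lc (Suc k) = Lp k / 2" using Lc_next by (simp add: Lp_def)
    then show ?case using outer[OF k] Suc k by (auto simp: inv_def)
  qed
  note step = outer[OF _ state[OF less_imp_le]]
  have "A N * (F (x N) - F xs) \<le> bregman d gd xs (u 0) - bregman d gd xs (u N) + 2 * \<delta> * real N * A N"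
    by (rule telescoped_estimate[where A = A and e = "\<lambda>k. F (x k) - F xs"
          and P = "\<lambda>k. bregman d gd xs (u k)", OF init(3) \<delta>])
      (simp_all add: step(7) less_imp_le[OF step(3)])
  moreover have "0 \<le> bregman d gd xs (u N)"
    using state[of N] by (intro bregman_nonneg[OF prox convQ _ xs_min(1)]) (simp add: inv_def)
  ultimately have "A N * (F (x N) - F xs) \<le> R\<^sup>2 + 2 * \<delta> * real N * A N"
    using R init(2) by simp
  moreover have "(real N + 1)\<^sup>2 / (4 * (2 * L)) \<le> A N"
    by (rule quadratic_growth[where A = A and Lp = Lp, OF init(3) _ N]) (simp_all add: L step(3-6))
  ultimately show ?thesis
    unfolding F_def by (intro rate_from_estimate) (auto simp: L)
qed

end
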